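(* Let $g\in\mathbb{F}_q[x]$ be monic squarefree of degree $d\ge1$ and $\mathcal{H}_g=\{h/g: h\in\mathbb{F}_q[x],\ (h,g)=1,\ \deg h<d\}$. Then the map $f\mapsto\chi_f$ is a bijection from $\mathcal{H}_g$ onto the set of primitive Dirichlet characters $\chi$ modulo $g^2$ satisfying $\chi^p=1$ on $(\mathbb{F}_q[x]/g^2)^\times$. In particular each $\chi_f$, $f\in\mathcal H_g$, is even.
   Context: $p>2$ prime, $q$ a power of $p$, $\psi:\mathbb{F}_p\to\mathbb{C}^\times$ a nontrivial additive character, $\mathrm{tr}_{q/p}$ the trace $\mathbb{F}_q\to\mathbb{F}_p$. For $f=h/g\in\mathcal H_g$ and $c\in\mathbb{F}_q[x]$, $\chi_f(c)=\psi\big(\mathrm{tr}_{q/p}\sum_{c(\alpha)=0}f(\alpha)\big)$ if $(c,g)=1$ (sum over roots in $\overline{\mathbb{F}}_q$ with multiplicity), $\chi_f(c)=0$ otherwise; this is a Dirichlet character modulo $g^2$. A Dirichlet character modulo a monic $M$ is a character of $(\mathbb{F}_q[x]/M)^\times$ extended by $0$ to polynomials not coprime to $M$; it is primitive if there is no proper monic divisor $M_1$ of $M$ such that $\chi(a)$ depends only on $a\bmod M_1$ for $a$ coprime to $M$; it is even if $\chi(a)=1$ for all $a\in\mathbb{F}_q^\times$. *)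

theory Defs
  imports Complex_Main "HOL-Algebra.Algebraic_Closure_Type"
    "HOL-Computational_Algebra.Squarefree"
begin

text \<open>The field F_q is a finite field type 'a; F_p is its prime subfield
  (the image of of_nat).  The exponent n with q = p^n.\<close>

definition fq_exp :: "'a::{field,finite} itself \<Rightarrow> nat" where
  "fq_exp _ = (THE n. card (UNIV :: 'a set) = CHAR('a) ^ n)"

definition trace_fq :: "'a::{field,finite} \<Rightarrow> 'a" where
  "trace_fq x = (\<Sum>i<fq_exp TYPE('a). x ^ (CHAR('a) ^ i))"

definition root_sum :: "'a::{field,finite} poly \<Rightarrow> 'a poly \<Rightarrow> 'a poly \<Rightarrow> 'a" where
  "root_sum h g c = of_ac
     (\<Sum>\<alpha>\<in>{\<alpha>. poly (map_poly to_ac c) \<alpha> = 0}.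
        of_nat (order \<alpha> (map_poly to_ac c)) *
        (poly (map_poly to_ac h) \<alpha> / poly (map_poly to_ac g) \<alpha>))"

text \<open>chi_f for f = h/g; psi is an additive character of the prime field, given
  as a function on 'a whose values matter only on the prime subfield.\<close>
definition chi_f :: "('a::{field,finite} \<Rightarrow> complex) \<Rightarrow> 'a poly \<Rightarrow> 'a poly \<Rightarrow> 'a poly \<Rightarrow> complex" where
  "chi_f \<psi> h g c = (if coprime c g then \<psi> (trace_fq (root_sum h g c)) else 0)"

definition prime_subfield :: "'a::field set" where
  "prime_subfield = range of_nat"

definition nontrivial_additive_char :: "('a::field \<Rightarrow> complex) \<Rightarrow> bool" where
  "nontrivial_additive_char \<psi> \<longleftrightarrow>
     (\<forall>x\<in>prime_subfield. \<forall>y\<in>prime_subfield. \<psi> (x + y) = \<psi> x * \<psi> y) \<and>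
     (\<forall>x\<in>prime_subfield. \<psi> x \<noteq> 0) \<and>
     (\<exists>x\<in>prime_subfield. \<psi> x \<noteq> 1)"

definition dirichlet_char :: "'a::field poly \<Rightarrow> ('a poly \<Rightarrow> complex) \<Rightarrow> bool" where
  "dirichlet_char M \<chi> \<longleftrightarrow>
     (\<forall>a b. a mod M = b mod M \<longrightarrow> \<chi> a = \<chi> b) \<and>
     (\<forall>a. \<not> coprime a M \<longrightarrow> \<chi> a = 0) \<and>
     (\<forall>a b. coprime a M \<longrightarrow> coprime b M \<longrightarrow> \<chi> (a * b) = \<chi> a * \<chi> b) \<and>
     \<chi> 1 = 1"

definition primitive_dirichlet_char :: "'a::field poly \<Rightarrow> ('a poly \<Rightarrow> complex) \<Rightarrow> bool" where
  "primitive_dirichlet_char M \<chi> \<longleftrightarrow> dirichlet_char M \<chi> \<and>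
     \<not> (\<exists>M1. lead_coeff M1 = 1 \<and> M1 dvd M \<and> M1 \<noteq> M \<and>
          (\<forall>a b. coprime a M \<longrightarrow> coprime b M \<longrightarrow> a mod M1 = b mod M1 \<longrightarrow> \<chi> a = \<chi> b))"

definition even_char :: "('a::field poly \<Rightarrow> complex) \<Rightarrow> bool" where
  "even_char \<chi> \<longleftrightarrow> (\<forall>a. a \<noteq> 0 \<longrightarrow> \<chi> [:a:] = 1)"

end

theory Submission
  imports Defs "Berlekamp_Zassenhaus.Finite_Field"
begin

text \<open>
  Write \<open>\<lambda>(w)\<close> for the coefficient of \<open>x\<^sup>d\<^sup>-\<^sup>1\<close> in \<open>w mod g\<close>; over the splitting field it is
  \<open>\<Sum>\<^sub>\<beta> w(\<beta>)/g'(\<beta>)\<close>, summed over the roots \<open>\<beta>\<close> of \<open>g\<close>. By the residue theorem (partial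
  fractions over the simple roots of \<open>g\<close>), the sum of \<open>f = h/g\<close> over the roots of \<open>c\<close> equals
  \<open>-\<lambda>(h c' c\<^sup>-\<^sup>1)\<close>. So \<open>\<chi>\<^sub>f\<close> only depends on \<open>c mod g\<^sup>2\<close>, is multiplicative, has order \<open>p\<close>,
  and on \<open>1 + g u\<close> it is the additive character \<open>u \<mapsto> \<Psi>(-\<lambda>(h g' u))\<close> of \<open>\<bbbF>\<^sub>q[x]/g\<close>, where
  \<open>\<Psi> = \<psi> \<circ> tr\<close>. Because \<open>\<lambda>\<close> is a perfect pairing and \<open>g'\<close> is a unit mod \<open>g\<close>, these
  restrictions are pairwise distinct and exhaust all additive characters; and a character of
  order \<open>p\<close> is determined by its restriction to \<open>1 + g \<bbbF>\<^sub>q[x]\<close>, since Frobenius is bijective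
  modulo the squarefree \<open>g\<close>. Finally, every proper monic divisor of \<open>g\<^sup>2\<close> divides \<open>g\<^sup>2/P\<close> for an
  irreducible \<open>P | g\<close>, and \<open>\<chi>\<^sub>f\<close> factors through \<open>g\<^sup>2/P\<close> exactly when \<open>P | h\<close>; this makes
  coprimality of \<open>h\<close> and \<open>g\<close> equivalent to primitivity.
\<close>

section \<open>Finite fields and the trace\<close>

lemma prime_CHAR_finite_field: "prime CHAR('a::{field,finite})"
  by (simp add: finite_imp_CHAR_pos prime_CHAR_semidom)

lemma freshmans_dream_diff:
  fixes x y :: "'a::comm_ring_1"
  assumes "prime CHAR('a)"
  shows "(x - y) ^ CHAR('a) = x ^ CHAR('a) - y ^ CHAR('a)"
  using freshmans_dream[OF assms refl, of "x - y" y] by (simp add: algebra_simps)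

lemma of_nat_power_CHAR:
  assumes "prime CHAR('a::comm_semiring_1)"
  shows "(of_nat k :: 'a) ^ CHAR('a) = of_nat k"
proof (induction k)
  case 0
  show ?case using prime_gt_0_nat[OF assms] by (simp add: power_0_left)
next
  case (Suc k)
  then show ?case using freshmans_dream[OF assms refl, of "of_nat k" 1] by (simp add: add.commute)
qed

definition add_closed :: "'a::monoid_add set \<Rightarrow> bool" where
  "add_closed T \<longleftrightarrow> 0 \<in> T \<and> (\<forall>x\<in>T. \<forall>y\<in>T. x + y \<in> T)"

lemma add_closed_of_nat_mult:
  assumes "add_closed T" "x \<in> T"
  shows "of_nat k * x \<in> (T :: 'a::semiring_1 set)"
  using assms by (induction k) (auto simp: add_closed_def algebra_simps)

lemma add_closed_diff:
  fixes T :: "'a::{field,finite} set"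
  assumes T: "add_closed T" and "x \<in> T" "y \<in> T"
  shows "x - y \<in> T"
proof -
  have "(of_nat (CHAR('a) - 1) :: 'a) = - 1"
    using prime_ge_1_nat[OF prime_CHAR_finite_field[where 'a='a]] by (simp add: of_nat_diff)
  then have "x - y = x + of_nat (CHAR('a) - 1) * y" by simp
  then show ?thesis using assms add_closed_of_nat_mult[OF T \<open>y \<in> T\<close>]
    unfolding add_closed_def by metis
qed

text \<open>A nonzero multiple \<open>j x\<close> with \<open>0 < j < p\<close> is undone by the multiple \<open>j\<^sup>p\<^sup>-\<^sup>2\<close>, since
  \<open>j\<^sup>p = j\<close> in the prime field.\<close>
lemma add_closed_of_nat_mult_cancel:
  fixes T :: "'a::{field,finite} set"
  assumes T: "add_closed T" and j: "0 < j" "j < CHAR('a)" and jx: "of_nat j * x \<in> T"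
  shows "x \<in> T"
proof -
  define m where "m = CHAR('a) - 2"
  have p: "CHAR('a) = Suc (Suc m)"
    using prime_ge_2_nat[OF prime_CHAR_finite_field[where 'a='a]] unfolding m_def by simp
  have "(of_nat j :: 'a) \<noteq> 0"
    using j by (auto simp: of_nat_eq_0_iff_char_dvd dest: dvd_imp_le)
  moreover have "(of_nat j :: 'a) * (of_nat j ^ m * of_nat j) = of_nat j * 1"
    using of_nat_power_CHAR[OF prime_CHAR_finite_field[where 'a='a], of j] p by (simp add: algebra_simps)
  ultimately have "(of_nat (j ^ m) :: 'a) * of_nat j = 1" by simp
  then have "x = of_nat (j ^ m) * (of_nat j * x)" by (metis mult.assoc mult_1)
  then show ?thesis using add_closed_of_nat_mult[OF T jx] by metis
qed

lemma add_closed_affine_inj: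
  fixes T :: "'a::{field,finite} set"
  assumes T: "add_closed T" and x: "x \<notin> T"
  shows "inj_on (\<lambda>(t, j). t + of_nat j * x) (T \<times> {..<CHAR('a)})"
proof -
  have less: "j1 = j2" if "t1 \<in> T" "t2 \<in> T" "j2 < j1" "j1 < CHAR('a)"
    "t1 + of_nat j1 * x = t2 + of_nat j2 * x" for t1 t2 j1 j2
  proof -
    have "of_nat (j1 - j2) * x = t2 - t1" using that by (simp add: of_nat_diff algebra_simps)
    then have "of_nat (j1 - j2) * x \<in> T" using add_closed_diff[OF T] that by simp
    moreover have "0 < j1 - j2" "j1 - j2 < CHAR('a)" using that by auto
    ultimately have "x \<in> T" using add_closed_of_nat_mult_cancel[OF T] by blast
    with x show ?thesis by simp
  qed
  show ?thesis
  proof (rule inj_onI, clarify)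
    fix t1 j1 t2 j2 assume t: "t1 \<in> T" "t2 \<in> T" and j: "j1 < CHAR('a)" "j2 < CHAR('a)"
      and eq: "t1 + of_nat j1 * x = t2 + of_nat j2 * x"
    have "j1 = j2" using less[OF t _ j(1) eq] less[OF t(2) t(1) _ j(2) eq[symmetric]] by fastforce
    then show "t1 = t2 \<and> j1 = j2" using eq by simp
  qed
qed

lemma add_closed_extend:
  fixes T :: "'a::{field,finite} set"
  assumes T: "add_closed T" and x: "x \<notin> T"
  defines "T' \<equiv> (\<lambda>(t, j). t + of_nat j * x) ` (T \<times> {..<CHAR('a)})"
  shows "add_closed T'" "T \<subseteq> T'" "x \<in> T'" "card T' = card T * CHAR('a)"
proof -
  have "CHAR('a) \<ge> 2" using prime_ge_2_nat[OF prime_CHAR_finite_field] by blast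
  then have in_T': "t + of_nat j * x \<in> T'" if "t \<in> T" for t j
    unfolding T'_def using that by (force intro: image_eqI[of _ _ "(t, j mod CHAR('a))"])
  show "add_closed T'"
    unfolding add_closed_def
  proof safe
    show "0 \<in> T'" using in_T'[of 0 0] T by (simp add: add_closed_def)
  next
    fix a b assume "a \<in> T'" "b \<in> T'"
    then obtain t1 j1 t2 j2 where "t1 \<in> T" "t2 \<in> T"
      "a = t1 + of_nat j1 * x" "b = t2 + of_nat j2 * x" unfolding T'_def by auto
    then show "a + b \<in> T'"
      using in_T'[of "t1 + t2" "j1 + j2"] T by (simp add: add_closed_def algebra_simps)
  qed
  show "T \<subseteq> T'" using in_T'[of _ 0] by auto
  show "x \<in> T'" using in_T'[of 0 1] T by (simp add: add_closed_def)
  show "card T' = card T * CHAR('a)"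
    using add_closed_affine_inj[OF T x] by (simp add: T'_def card_image card_cartesian_product)
qed

lemma CARD_eq_card_add_closed_mult_CHAR_power:
  fixes T :: "'a::{field,finite} set"
  assumes "add_closed T"
  shows "\<exists>n. CARD('a) = card T * CHAR('a) ^ n"
  using assms
proof (induction "card (UNIV - T)" arbitrary: T rule: less_induct)
  case less
  show ?case
  proof (cases "T = UNIV")
    case False
    then obtain x where x: "x \<notin> T" by auto
    define T' where "T' = (\<lambda>(t, j). t + of_nat j * x) ` (T \<times> {..<CHAR('a)})"
    note T' = add_closed_extend[OF less.prems x, folded T'_def]
    have "card (UNIV - T') < card (UNIV - T)"
      by (rule psubset_card_mono) (use T' x in auto)
    with less.hyps T' obtain n where "CARD('a) = card T' * CHAR('a) ^ n" by blast
    then show ?thesis using T' by (intro exI[of _ "Suc n"]) (simp add: algebra_simps)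
  qed (intro exI[of _ 0], simp)
qed

lemma card_finite_field: "CARD('a::{field,finite}) = CHAR('a) ^ fq_exp TYPE('a)"
proof -
  have "add_closed ({0} :: 'a set)" by (simp add: add_closed_def)
  then obtain n where n: "CARD('a) = CHAR('a) ^ n" using CARD_eq_card_add_closed_mult_CHAR_power by fastforce
  moreover have "CHAR('a) > 1" using prime_gt_1_nat[OF prime_CHAR_finite_field] .
  ultimately have "\<exists>!n. CARD('a) = CHAR('a) ^ n" by (auto simp: power_inject_exp)
  then show ?thesis unfolding fq_exp_def by (rule theI')
qed

lemma fq_exp_pos: "fq_exp TYPE('a::{field,finite}) > 0"
proof (rule ccontr)
  assume "\<not> ?thesis"
  then have "CARD('a) = 1" using card_finite_field[where 'a='a] by simp
  moreover have "card {0::'a, 1} \<le> CARD('a)" by (rule card_mono) auto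
  ultimately show False by simp
qed

lemma power_card_finite_field: "(x::'a::{field,finite}) ^ CARD('a) = x"
proof (cases "x = 0")
  case False
  have "x ^ card (UNIV - {0::'a}) * \<Prod>(UNIV - {0}) = (\<Prod>y\<in>UNIV - {0}. x * y)"
    by (simp add: prod.distrib)
  also have "\<dots> = \<Prod>(UNIV - {0::'a})"
    by (rule prod.reindex_bij_witness[of _ "\<lambda>y. y / x" "\<lambda>y. x * y"]) (use False in auto)
  finally have "x ^ (CARD('a) - 1) = 1" by (simp add: card_Diff_singleton)
  moreover have "CARD('a) = Suc (CARD('a) - 1)" using finite_UNIV_card_ge_0[where 'a='a] by simp
  ultimately show ?thesis by (metis power_Suc mult_1_right)
qed (simp add: finite_UNIV_card_ge_0 power_0_left)

text \<open>The prime subfield consists of the roots of \<open>X\<^sup>p - X\<close>: it supplies \<open>p\<close> of them, and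
  there are no more.\<close>
lemma prime_subfield_iff_power_CHAR:
  "(y::'a::{field,finite}) \<in> prime_subfield \<longleftrightarrow> y ^ CHAR('a) = y"
proof
  show "y ^ CHAR('a) = y" if "y \<in> prime_subfield"
    using that of_nat_power_CHAR[OF prime_CHAR_finite_field] by (auto simp: prime_subfield_def)
next
  assume y: "y ^ CHAR('a) = y"
  define p where "p = CHAR('a)"
  have p: "p \<ge> 2" using prime_ge_2_nat[OF prime_CHAR_finite_field] p_def by blast
  define P :: "'a poly" where "P = monom 1 p - [:0, 1:]"
  have "coeff P p = 1" using p by (simp add: P_def coeff_monom coeff_pCons split: nat.split)
  then have P0: "P \<noteq> 0" by auto
  have "degree P \<le> p" unfolding P_def using p by (intro degree_diff_le) (auto simp: degree_monom_eq)
  then have card_roots: "card {z. poly P z = 0} \<le> p"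
    using card_poly_roots_bound[OF P0] by linarith
  have "of_nat ` {..<p} \<subseteq> {z::'a. poly P z = 0}"
    using of_nat_power_CHAR[OF prime_CHAR_finite_field] by (auto simp: P_def poly_monom p_def)
  moreover have "card (of_nat ` {..<p} :: 'a set) = p"
    by (subst card_image) (auto simp: inj_on_def of_nat_eq_iff_cong_CHAR cong_def p_def)
  ultimately have "of_nat ` {..<p} = {z::'a. poly P z = 0}"
    using card_roots by (intro card_seteq poly_roots_finite[OF P0]) auto
  moreover have "poly P y = 0" using y by (simp add: P_def poly_monom p_def)
  ultimately show "y \<in> prime_subfield" unfolding prime_subfield_def by blast
qed

lemma power_CHAR_power_prime_subfield:
  "(s::'a::{field,finite}) \<in> prime_subfield \<Longrightarrow> s ^ (CHAR('a) ^ i) = s"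
  by (induction i) (simp_all add: prime_subfield_iff_power_CHAR power_mult flip: power_Suc2)

lemma trace_fq_in_prime_subfield: "trace_fq (x::'a::{field,finite}) \<in> prime_subfield"
proof -
  define p n where "p = CHAR('a)" and "n = fq_exp TYPE('a)"
  define f where "f i = x ^ (p ^ i)" for i
  have "trace_fq x ^ p = (\<Sum>i<n. f i ^ p)"
    unfolding trace_fq_def p_def n_def f_def by (rule freshmans_dream_sum[OF prime_CHAR_finite_field refl])
  also have "\<dots> = (\<Sum>i<n. f (Suc i))"
    by (simp add: f_def mult.commute flip: power_mult)
  also have "\<dots> = (\<Sum>i<n. f i)"
  proof -
    have "f n = f 0"
      using power_card_finite_field[of x] card_finite_field[where 'a='a] by (simp add: f_def p_def n_def)
    then show ?thesis using sum.lessThan_Suc_shift[of f n] by (simp add: add.commute)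
  qed
  finally show ?thesis unfolding prime_subfield_iff_power_CHAR trace_fq_def f_def p_def n_def .
qed

lemma trace_fq_add: "trace_fq ((x::'a::{field,finite}) + y) = trace_fq x + trace_fq y"
  unfolding trace_fq_def by (simp add: freshmans_dream'[OF prime_CHAR_finite_field] sum.distrib)

lemma trace_fq_mult_prime_subfield:
  "(s::'a::{field,finite}) \<in> prime_subfield \<Longrightarrow> trace_fq (s * x) = s * trace_fq x"
  unfolding trace_fq_def by (simp add: power_mult_distrib power_CHAR_power_prime_subfield sum_distrib_left)

text \<open>The trace is a polynomial of degree \<open>p\<^sup>n\<^sup>-\<^sup>1 < q\<close> in \<open>x\<close>, so it cannot vanish on all
  of \<open>\<bbbF>\<^sub>q\<close>.\<close>
lemma trace_fq_nonzero: "\<exists>x::'a::{field,finite}. trace_fq x \<noteq> 0"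
proof (rule ccontr)
  assume H: "\<not> ?thesis"
  define p n where "p = CHAR('a)" and "n = fq_exp TYPE('a)"
  have p: "p \<ge> 2" using prime_ge_2_nat[OF prime_CHAR_finite_field] p_def by blast
  have n: "n > 0" using fq_exp_pos n_def by simp
  define T :: "'a poly" where "T = (\<Sum>i<n. monom 1 (p ^ i))"
  have "coeff T (p ^ (n - 1)) = (\<Sum>i<n. if p ^ i = p ^ (n - 1) then 1 else 0)"
    by (simp add: T_def coeff_sum coeff_monom)
  also have "\<dots> = 1"
    using n p by (simp add: power_inject_exp sum.delta' cong: if_cong)
  finally have T0: "T \<noteq> 0" by auto
  have "degree T \<le> p ^ (n - 1)"
    unfolding T_def using p by (intro degree_sum_le) (auto simp: degree_monom_eq intro: power_increasing)
  moreover have "{x. poly T x = 0} = UNIV"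
    using H by (auto simp: T_def poly_sum poly_monom trace_fq_def p_def n_def)
  ultimately have "CARD('a) \<le> p ^ (n - 1)" using card_poly_roots_bound[OF T0] by simp
  moreover have "p ^ (n - 1) < p ^ n" using p n by (intro power_strict_increasing) auto
  ultimately show False using card_finite_field[where 'a='a] by (simp add: p_def n_def)
qed

lemma trace_fq_onto_prime_subfield:
  assumes "(s::'a::{field,finite}) \<in> prime_subfield"
  shows "\<exists>x. trace_fq x = s"
proof -
  obtain x0 :: 'a where x0: "trace_fq x0 \<noteq> 0" using trace_fq_nonzero by blast
  have "s / trace_fq x0 \<in> prime_subfield"
    using assms trace_fq_in_prime_subfield[of x0] by (simp add: prime_subfield_iff_power_CHAR power_divide)
  from trace_fq_mult_prime_subfield[OF this, of x0] have "trace_fq (s / trace_fq x0 * x0) = s"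
    using x0 by simp
  then show ?thesis ..
qed

section \<open>The additive character \<open>\<Psi> = \<psi> \<circ> tr\<close>\<close>

definition Psi :: "('a::{field,finite} \<Rightarrow> complex) \<Rightarrow> 'a \<Rightarrow> complex" where
  "Psi \<psi> x = \<psi> (trace_fq x)"

locale additive_character =
  fixes \<psi> :: "'a::{field,finite} \<Rightarrow> complex"
  assumes \<psi>: "nontrivial_additive_char \<psi>"
begin

lemma Psi_add: "Psi \<psi> (x + y) = Psi \<psi> x * Psi \<psi> y"
  using \<psi> trace_fq_in_prime_subfield
  unfolding Psi_def nontrivial_additive_char_def trace_fq_add by blast

lemma Psi_nonzero: "Psi \<psi> x \<noteq> 0"
  using \<psi> trace_fq_in_prime_subfield unfolding Psi_def nontrivial_additive_char_def by blast

lemma Psi_0: "Psi \<psi> 0 = 1"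
  using Psi_add[of 0 0] Psi_nonzero[of 0] by simp

lemma Psi_minus: "Psi \<psi> (- x) = inverse (Psi \<psi> x)"
  using Psi_add[of "- x" x] Psi_0 Psi_nonzero[of x] by (simp add: field_simps)

lemma Psi_power_CHAR: "Psi \<psi> x ^ CHAR('a) = 1"
proof -
  have "Psi \<psi> (of_nat k * x) = Psi \<psi> x ^ k" for k
    by (induction k) (simp_all add: Psi_0 Psi_add algebra_simps)
  from this[of "CHAR('a)"] show ?thesis by (simp add: Psi_0)
qed

lemma Psi_nontrivial: "\<exists>x. Psi \<psi> x \<noteq> 1"
proof -
  obtain s where "s \<in> prime_subfield" "\<psi> s \<noteq> 1"
    using \<psi> unfolding nontrivial_additive_char_def by blast
  with trace_fq_onto_prime_subfield show ?thesis unfolding Psi_def by metis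
qed

end

text \<open>Translating the summation variable by \<open>v\<^sub>0\<close> multiplies the sum by \<open>\<phi> v\<^sub>0 \<noteq> 1\<close>.\<close>
lemma sum_nontrivial_char_eq_0:
  fixes \<phi> :: "'b::ab_group_add \<Rightarrow> complex"
  assumes "finite V" and add: "\<And>u v. u \<in> V \<Longrightarrow> v \<in> V \<Longrightarrow> u + v \<in> V"
    and minus: "\<And>u. u \<in> V \<Longrightarrow> - u \<in> V"
    and hom: "\<And>u v. \<phi> (u + v) = \<phi> u * \<phi> v"
    and v0: "v0 \<in> V" "\<phi> v0 \<noteq> 1"
  shows "(\<Sum>u\<in>V. \<phi> u) = 0"
proof -
  have "u - v0 \<in> V" if "u \<in> V" for u
    using add[OF that minus[OF v0(1)]] by simp
  then have "(\<Sum>u\<in>V. \<phi> u) = (\<Sum>u\<in>V. \<phi> (u + v0))"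
    by (intro sum.reindex_bij_witness[of _ "\<lambda>u. u + v0" "\<lambda>u. u - v0"]) (auto simp: add v0)
  also have "\<dots> = (\<Sum>u\<in>V. \<phi> u) * \<phi> v0"
    using hom v0 by (simp add: sum_distrib_right)
  finally have "(\<Sum>u\<in>V. \<phi> u) * (1 - \<phi> v0) = 0" by (simp add: algebra_simps)
  then show ?thesis using v0 by simp
qed

section \<open>Coprimality and squarefreeness of polynomials\<close>

text \<open>Polynomials over a field given by a type class form a Euclidean ring but not an instance
  of \<open>semiring_gcd\<close>, so the Bezout-based coprimality facts of the library are not available.\<close>
lemma coprime_imp_bezout:
  fixes a b :: "'a::euclidean_ring"
  assumes "coprime a b"
  shows "\<exists>s t. s * a + t * b = 1"
proof -
  define I where "I = {s * a + t * b | s t. True}"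
  have "a \<in> I" unfolding I_def by (rule CollectI, rule exI[of _ 1], rule exI[of _ 0]) simp
  moreover have "b \<in> I" unfolding I_def by (rule CollectI, rule exI[of _ 0], rule exI[of _ 1]) simp
  moreover have "a \<noteq> 0 \<or> b \<noteq> 0" using assms by auto
  ultimately obtain m0 where "m0 \<in> I \<and> m0 \<noteq> 0" by blast
  from ex_has_least_nat[of "\<lambda>m. m \<in> I \<and> m \<noteq> 0", OF this, of euclidean_size]
  obtain m where m: "m \<in> I" "m \<noteq> 0"
    and least: "\<And>m'. m' \<in> I \<Longrightarrow> m' \<noteq> 0 \<Longrightarrow> euclidean_size m \<le> euclidean_size m'"
    by blast
  have "m dvd x" if "x \<in> I" for x
  proof (rule ccontr)
    assume "\<not> m dvd x"
    moreover have "x mod m \<in> I"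
    proof -
      obtain s1 t1 s2 t2 where "x = s1 * a + t1 * b" "m = s2 * a + t2 * b"
        using \<open>x \<in> I\<close> m(1) unfolding I_def by blast
      then have "x mod m = (s1 - x div m * s2) * a + (t1 - x div m * t2) * b"
        by (simp add: minus_div_mult_eq_mod[symmetric] algebra_simps)
      then show ?thesis unfolding I_def by blast
    qed
    ultimately show False using least[of "x mod m"] mod_size_less[OF m(2), of x] by (simp add: mod_eq_0_iff_dvd)
  qed
  then have "is_unit m" using assms \<open>a \<in> I\<close> \<open>b \<in> I\<close> by (simp add: coprime_def)
  then obtain k where "1 = m * k" ..
  moreover obtain s t where "m = s * a + t * b" using m(1) unfolding I_def by blast
  ultimately have "(k * s) * a + (k * t) * b = 1" by (simp add: algebra_simps)
  then show ?thesis by blast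
qed

lemma bezout_imp_coprime:
  assumes "s * a + t * b = 1"
  shows "coprime a (b :: 'a::{comm_ring_1,algebraic_semidom})"
  by (rule coprimeI) (metis assms dvd_add dvd_mult)

lemma coprime_dvd_mult_imp_dvd:
  fixes a b c :: "'a::euclidean_ring"
  assumes "coprime a b" "a dvd b * c"
  shows "a dvd c"
proof -
  obtain s t where "s * a + t * b = 1" using coprime_imp_bezout[OF assms(1)] by blast
  then have "c = s * a * c + t * (b * c)" by (metis mult.assoc mult_1 distrib_right)
  moreover have "a dvd s * a * c + t * (b * c)" using assms(2) by simp
  ultimately show ?thesis by metis
qed

lemma coprime_mult_leftI:
  fixes a b c :: "'a::euclidean_ring"
  assumes "coprime a c" "coprime b c"
  shows "coprime (a * b) c"
proof -
  obtain s1 t1 s2 t2 where "s1 * a + t1 * c = 1" "s2 * b + t2 * c = 1"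
    using coprime_imp_bezout assms by metis
  then have "(s1 * a + t1 * c) * (s2 * b + t2 * c) = 1" by simp
  then have "(s1 * s2) * (a * b) + (s1 * a * t2 + t1 * (s2 * b + t2 * c)) * c = 1"
    by (simp add: algebra_simps)
  then show ?thesis by (rule bezout_imp_coprime)
qed

lemma coprime_power_leftI:
  fixes a c :: "'a::euclidean_ring"
  shows "coprime a c \<Longrightarrow> coprime (a ^ n) c"
  by (induction n) (simp_all add: coprime_mult_leftI)

lemma coprime_power2_right_iff:
  fixes a c :: "'a::euclidean_ring"
  shows "coprime a (c ^ 2) \<longleftrightarrow> coprime a c"
proof
  show "coprime a c" if "coprime a (c ^ 2)"
    using that unfolding coprime_def by (simp add: power2_eq_square)
  show "coprime a (c ^ 2)" if "coprime a c"
    using coprime_power_leftI[of c a 2] that by (simp add: coprime_commute)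
qed

lemma squarefree_mult_imp_coprime:
  fixes a b :: "'a::field poly"
  assumes "squarefree (a * b)"
  shows "coprime a b"
proof (rule ccontr)
  assume "\<not> coprime a b"
  then obtain c where c: "c dvd a" "c dvd b" "\<not> is_unit c" by (rule not_coprimeE)
  have "c \<noteq> 0" using c(2) assms by auto
  then obtain P r where "irreducible P" "c = P * r"
    using c(3) irreducible_monic_factor is_unit_iff_degree by blast
  then have "P dvd a" "P dvd b" "\<not> is_unit P"
    using c by (auto intro: dvd_mult_left dest: irreducible_not_unit)
  then have "P ^ 2 dvd a * b" "\<not> is_unit P" by (simp_all add: power2_eq_square mult_dvd_mono)
  then show False using assms by (auto dest: squarefreeD)
qed

lemma squarefree_dvd_power_imp_dvd:
  fixes g y :: "'a::field poly"
  assumes "squarefree g" "g dvd y ^ n" "n > 0"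
  shows "g dvd y"
  using assms
proof (induction "degree g" arbitrary: g y rule: less_induct)
  case less
  have g0: "g \<noteq> 0" using less.prems(1) by auto
  show ?case
  proof (cases "degree g = 0")
    case True
    then show ?thesis using g0 is_unit_iff_degree by blast
  next
    case False
    then obtain P g1 where P: "irreducible P" "g = P * g1"
      using irreducible_monic_factor[of g] by auto
    have P0: "P \<noteq> 0" using P(1) by auto
    have "P dvd y"
      using less.prems(2,3) P field_poly_irreducible_imp_prime prime_elem_dvd_power_iff
      by (metis dvd_mult_left)
    then obtain y1 where y1: "y = P * y1" ..
    obtain m where m: "n = Suc m" using less.prems(3) by (cases n) auto
    have "P * g1 dvd P * (P ^ m * y1 ^ n)"
      using less.prems(2) P(2) y1 m by (simp add: power_mult_distrib algebra_simps)
    then have "g1 dvd y1 ^ n * P ^ m" using P0 by (simp add: mult.commute)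
    moreover have "coprime g1 (P ^ m)"
      using squarefree_mult_imp_coprime less.prems(1) P(2)
      by (metis coprime_commute coprime_power_leftI)
    ultimately have "g1 dvd y1 ^ n"
      using coprime_dvd_mult_imp_dvd by (metis mult.commute)
    moreover have "degree g1 < degree g"
      using P(2) P(1) g0 by (auto simp: degree_mult_eq irreducible_def is_unit_iff_degree)
    moreover have "squarefree g1" using less.prems(1) P(2) squarefree_multD(2) by blast
    ultimately have "g1 dvd y1" using less.hyps less.prems(3) by blast
    then show ?thesis using P(2) y1 by simp
  qed
qed

lemma pderiv_eq_0_imp_coeff_eq_0:
  fixes P :: "'a::{field,finite} poly"
  assumes "pderiv P = 0" "\<not> CHAR('a) dvd m"
  shows "coeff P m = 0"
proof (cases m)
  case (Suc k)
  have "of_nat (Suc k) * coeff P (Suc k) = (0::'a)"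
    using arg_cong[OF assms(1), of "\<lambda>P. coeff P k"] by (simp add: coeff_pderiv)
  moreover have "(of_nat (Suc k) :: 'a) \<noteq> 0"
    using assms(2) Suc of_nat_eq_0_iff_char_dvd[of "Suc k", where 'a='a] by blast
  ultimately show ?thesis using Suc by simp
qed (use assms in simp)

lemma poly_eq_sum_monom_multiples:
  assumes "p > 0" and coeff_0: "\<And>m. \<not> p dvd m \<Longrightarrow> coeff P m = 0"
  shows "P = (\<Sum>i\<le>degree P. monom (coeff P (i * p)) (i * p))"
proof (rule poly_eqI)
  fix m
  have "coeff (\<Sum>i\<le>degree P. monom (coeff P (i * p)) (i * p)) m =
        (\<Sum>i\<le>degree P. if i = m div p \<and> p dvd m then coeff P m else 0)"
    unfolding coeff_sum coeff_monom using \<open>p > 0\<close> by (intro sum.cong) auto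
  also have "\<dots> = coeff P m"
  proof (cases "p dvd m \<and> m div p \<le> degree P")
    case False
    have "coeff P m = 0"
    proof (cases "p dvd m")
      case True
      with False have "degree P < m div p" by simp
      then show ?thesis using div_le_dividend[of m p] by (intro coeff_eq_0) linarith
    qed (rule coeff_0)
    then show ?thesis by (simp add: sum.neutral)
  qed (simp add: sum.delta' cong: conj_cong)
  finally show "coeff P m = coeff (\<Sum>i\<le>degree P. monom (coeff P (i * p)) (i * p)) m" ..
qed

text \<open>Over a finite field every coefficient has a \<open>p\<close>-th root.\<close>
lemma pderiv_eq_0_imp_power_CHAR:
  fixes P :: "'a::{field,finite} poly"
  assumes "pderiv P = 0"
  shows "\<exists>Q. P = Q ^ CHAR('a)"
proof -
  define p where "p = CHAR('a)"
  have "inj (\<lambda>x::'a. x ^ p)"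
  proof (rule injI)
    fix x y :: 'a assume "x ^ p = y ^ p"
    then have "(x - y) ^ p = 0" by (simp add: freshmans_dream_diff[OF prime_CHAR_finite_field] p_def)
    then show "x = y" by simp
  qed
  then have "surj (\<lambda>x::'a. x ^ p)" by (simp add: finite_UNIV_inj_surj)
  then obtain rt :: "'a \<Rightarrow> 'a" where rt: "\<And>a. rt a ^ p = a" by (metis surj_f_inv_f)
  define Q where "Q = (\<Sum>i\<le>degree P. monom (rt (coeff P (i * p))) i)"
  have "Q ^ p = (\<Sum>i\<le>degree P. monom (rt (coeff P (i * p))) i ^ p)"
    unfolding Q_def p_def
    by (rule freshmans_dream_sum) (use prime_CHAR_finite_field[where 'a='a] in simp_all)
  also have "\<dots> = (\<Sum>i\<le>degree P. monom (coeff P (i * p)) (i * p))"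
    by (simp add: monom_power rt)
  also have "\<dots> = P"
    using pderiv_eq_0_imp_coeff_eq_0[OF assms] prime_gt_0_nat[OF prime_CHAR_finite_field]
    by (intro poly_eq_sum_monom_multiples[symmetric]) (simp_all add: p_def)
  finally show ?thesis unfolding p_def by metis
qed

lemma squarefree_imp_coprime_pderiv:
  fixes g :: "'a::{field,finite} poly"
  assumes g: "squarefree g"
  shows "coprime g (pderiv g)"
proof (rule ccontr)
  assume "\<not> coprime g (pderiv g)"
  then obtain c where c: "c dvd g" "c dvd pderiv g" "\<not> is_unit c" by (rule not_coprimeE)
  have "c \<noteq> 0" using c(1) g by auto
  then obtain P r where P: "irreducible P" "c = P * r"
    using c(3) irreducible_monic_factor is_unit_iff_degree by blast
  then have "P dvd g" "P dvd pderiv g" using c by (auto intro: dvd_mult_left)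
  then obtain k where k: "g = P * k" by blast
  have "P dvd P * pderiv k + k * pderiv P" using \<open>P dvd pderiv g\<close> k by (simp add: pderiv_mult)
  then have "P dvd k * pderiv P" by (simp add: dvd_add_right_iff)
  moreover have "coprime P k" using g k squarefree_mult_imp_coprime by blast
  ultimately have dvd: "P dvd pderiv P" using coprime_dvd_mult_imp_dvd by blast
  have "pderiv P = 0"
  proof (rule ccontr)
    assume "pderiv P \<noteq> 0"
    then have "degree P \<le> degree (pderiv P)" using dvd by (rule dvd_imp_degree_le[rotated])
    moreover have "degree P > 0" using P(1) by (auto simp: irreducible_def is_unit_iff_degree)
    ultimately show False using degree_pderiv_le[of P] by linarith
  qed
  then obtain Q where Q: "P = Q ^ CHAR('a)" using pderiv_eq_0_imp_power_CHAR by blast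
  then have "Q ^ 2 dvd g"
    using k prime_ge_2_nat[OF prime_CHAR_finite_field[where 'a='a]]
    by (metis dvd_mult2 le_imp_power_dvd)
  then have "is_unit Q" by (rule squarefreeD[OF g])
  then have "is_unit P" unfolding Q by (rule is_unit_power_iff[THEN iffD2, OF disjI1])
  then show False using P(1) by auto
qed

lemma proper_monic_divisor_of_square:
  fixes g M :: "'a::field poly"
  assumes "lead_coeff g = 1" "lead_coeff M = 1" "M dvd g ^ 2" "M \<noteq> g ^ 2"
  shows "\<exists>P g1. irreducible P \<and> g = P * g1 \<and> M dvd P * g1 ^ 2"
proof -
  obtain D where D: "g ^ 2 = M * D" using assms(3) ..
  have g0: "g \<noteq> 0" using assms(1) by auto
  have "lead_coeff D = 1"
    using arg_cong[OF D, of lead_coeff] assms(1,2) by (simp add: lead_coeff_mult lead_coeff_power)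
  moreover have "D \<noteq> 1" using D assms(4) by auto
  ultimately have "degree D > 0" using monic_degree_0 by blast
  then obtain P R where P: "irreducible P" "D = P * R" using irreducible_monic_factor by blast
  then have "P dvd g ^ 2" unfolding D by simp
  then have "P dvd g" using P(1) field_poly_irreducible_imp_prime prime_elem_dvd_power by blast
  then obtain g1 where g1: "g = P * g1" ..
  have "P * (M * R) = M * D" unfolding P(2) by (simp only: ac_simps)
  also have "\<dots> = P * (P * g1 ^ 2)" unfolding D[symmetric] g1 by (simp only: power2_eq_square ac_simps)
  finally have "M * R = P * g1 ^ 2" using P(1) by auto
  then have "M dvd P * g1 ^ 2" by (metis dvd_triv_left)
  then show ?thesis using P(1) g1 by blast
qed

section \<open>Partial fractions over an algebraically closed field\<close>

lemma sum_count_eq_sum_mset: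
  fixes f :: "'b \<Rightarrow> 'c::semiring_1"
  assumes "finite S" "set_mset A \<subseteq> S"
  shows "(\<Sum>x\<in>S. of_nat (count A x) * f x) = (\<Sum>x\<in>#A. f x)"
  using assms(2)
proof (induction A)
  case (add y A)
  have "of_nat (count (add_mset y A) x) * f x = of_nat (count A x) * f x + (if y = x then f x else 0)"
    for x by (simp add: algebra_simps)
  then have "(\<Sum>x\<in>S. of_nat (count (add_mset y A) x) * f x) =
        (\<Sum>x\<in>S. of_nat (count A x) * f x) + (\<Sum>x\<in>S. if y = x then f x else 0)"
    by (simp add: sum.distrib)
  also have "(\<Sum>x\<in>S. if y = x then f x else 0) = f y" using add.prems assms(1) by simp
  finally show ?case using add by (simp add: add.commute)
qed simp

lemma proots_factorization:
  fixes p :: "'a::alg_closed_field poly"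
  assumes "p \<noteq> 0"
  shows "p = smult (lead_coeff p) (\<Prod>x\<in>#proots p. [:-x, 1:])" "size (proots p) = degree p"
proof -
  obtain A where A: "size A = degree p" "p = smult (lead_coeff p) (\<Prod>x\<in>#A. [:-x, 1:])"
    using alg_closed_imp_factorization[OF assms] by blast
  have linear: "proots [:-x, 1:] = {#x#}" for x :: 'a using proots_linear_factor[of "- x"] by simp
  have "proots (\<Prod>x\<in>#A. [:-x, 1:]) = A"
  proof (induction A)
    case (add x A)
    have "(\<Prod>x\<in>#A. [:-x, 1:]) \<noteq> 0" by (auto simp: prod_mset_zero_iff)
    then show ?case using add by (simp add: proots_mult linear del: mult_pCons_left)
  qed simp
  then have "proots p = A" using assms by (subst A(2)) simp
  then show "p = smult (lead_coeff p) (\<Prod>x\<in>#proots p. [:-x, 1:])" "size (proots p) = degree p"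
    using A by simp_all
qed

lemma logderiv_eq_sum_proots:
  fixes p :: "'a::alg_closed_field poly"
  assumes "poly p \<alpha> \<noteq> 0"
  shows "poly (pderiv p) \<alpha> / poly p \<alpha> = (\<Sum>x\<in>#proots p. 1 / (\<alpha> - x))"
proof -
  have linear_product: "poly (pderiv P) \<alpha> / poly P \<alpha> = (\<Sum>x\<in>#A. 1 / (\<alpha> - x))"
    if "P = (\<Prod>x\<in>#A. [:-x, 1:])" "poly P \<alpha> \<noteq> 0" for P and A :: "'a multiset"
    using that
  proof (induction A arbitrary: P)
    case (add y A)
    define Q where "Q = (\<Prod>x\<in>#A. [:-x, 1:])"
    have P: "P = [:-y, 1:] * Q" using add.prems(1) by (simp add: Q_def del: mult_pCons_left)
    have PQ: "poly P \<alpha> = (\<alpha> - y) * poly Q \<alpha>" unfolding P by (simp only: poly_mult) simp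
    then have nz: "\<alpha> - y \<noteq> 0" "poly Q \<alpha> \<noteq> 0" using add.prems(2) by auto
    have "pderiv [:-y, 1:] = 1" by (simp add: pderiv_pCons)
    then have "pderiv P = [:-y, 1:] * pderiv Q + Q" unfolding P by (simp only: pderiv_mult mult_1_right)
    then have dP: "poly (pderiv P) \<alpha> = (\<alpha> - y) * poly (pderiv Q) \<alpha> + poly Q \<alpha>"
      by (simp only: poly_add poly_mult) simp
    have "poly (pderiv P) \<alpha> / poly P \<alpha> = 1 / (\<alpha> - y) + poly (pderiv Q) \<alpha> / poly Q \<alpha>"
      unfolding dP PQ using nz by (simp add: add_divide_distrib)
    then show ?case using add.IH[OF Q_def nz(2)] by simp
  qed (simp add: pderiv_pCons)
  define P where "P = (\<Prod>x\<in>#proots p. [:-x, 1:])"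
  have "p \<noteq> 0" using assms by auto
  then have p: "p = smult (lead_coeff p) P" "lead_coeff p \<noteq> 0"
    using proots_factorization(1) by (auto simp: P_def)
  then have "poly P \<alpha> \<noteq> 0" using assms by (metis mult_zero_right poly_smult)
  moreover have "poly (pderiv p) \<alpha> / poly p \<alpha> = poly (pderiv P) \<alpha> / poly P \<alpha>"
    using p(2) by (subst (1 2) p(1)) (simp add: pderiv_smult)
  ultimately show ?thesis using linear_product[OF P_def] by simp
qed

lemma card_roots_separable:
  fixes G :: "'a::alg_closed_field poly"
  assumes G0: "G \<noteq> 0" and separable: "\<And>\<beta>. poly G \<beta> = 0 \<Longrightarrow> poly (pderiv G) \<beta> \<noteq> 0"
  shows "card {x. poly G x = 0} = degree G"
proof -
  have simple: "count (proots G) x \<le> 1" for x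
  proof (rule ccontr)
    assume "\<not> count (proots G) x \<le> 1"
    then have "[:-x, 1:] ^ 2 dvd G" using G0 by (simp add: order_divides)
    then obtain K where K: "G = [:-x, 1:] ^ 2 * K" ..
    have "pderiv G = [:-x, 1:] * [:-x, 1:] * pderiv K +
        K * ([:-x, 1:] * pderiv [:-x, 1:] + [:-x, 1:] * pderiv [:-x, 1:])"
      by (subst K) (simp only: pderiv_mult power2_eq_square)
    moreover have "poly [:-x, 1:] x = 0" by simp
    ultimately have "poly (pderiv G) x = 0"
      by (simp only: poly_add poly_mult mult_zero_left mult_zero_right add_0)
    moreover have "poly G x = 0" using K by simp
    ultimately show False using separable by blast
  qed
  have fin: "finite {x. poly G x = 0}" using poly_roots_finite[OF G0] .
  have "degree G = (\<Sum>x\<in>#proots G. 1)"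
    using proots_factorization(2)[OF G0] size_eq_sum_mset by metis
  also have "\<dots> = (\<Sum>x\<in>{x. poly G x = 0}. of_nat (count (proots G) x) * 1)"
    by (rule sum_count_eq_sum_mset[symmetric]) (use fin G0 in simp_all)
  also have "\<dots> \<le> (\<Sum>x\<in>{x. poly G x = 0}. 1)"
    using simple by (intro sum_mono) simp
  finally show ?thesis using card_poly_roots_bound[OF G0] by simp
qed

lemma linear_factor_quotient:
  fixes G :: "'a::field poly"
  assumes "poly G \<beta> = 0" "G \<noteq> 0"
  defines "Q \<equiv> G div [:-\<beta>, 1:]"
  shows "degree Q = degree G - 1" "lead_coeff Q = lead_coeff G"
    "poly Q \<beta> = poly (pderiv G) \<beta>" "\<alpha> \<noteq> \<beta> \<Longrightarrow> poly Q \<alpha> = poly G \<alpha> / (\<alpha> - \<beta>)"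
proof -
  have GQ: "[:-\<beta>, 1:] * Q = G" unfolding Q_def using assms(1)
    by (metis dvd_mult_div_cancel poly_eq_0_iff_dvd)
  then have "Q \<noteq> 0" using assms(2) by auto
  then have "degree ([:-\<beta>, 1:] * Q) = degree [:-\<beta>, 1:] + degree Q"
    by (intro degree_mult_eq) simp_all
  moreover have "lead_coeff ([:-\<beta>, 1:] * Q) = lead_coeff [:-\<beta>, 1:] * lead_coeff Q"
    by (rule lead_coeff_mult)
  ultimately show "degree Q = degree G - 1" "lead_coeff Q = lead_coeff G" unfolding GQ by simp_all
  have "pderiv [:-\<beta>, 1:] = 1" by (simp add: pderiv_pCons)
  then have "pderiv ([:-\<beta>, 1:] * Q) = [:-\<beta>, 1:] * pderiv Q + Q"
    by (simp only: pderiv_mult mult_1_right)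
  then show "poly Q \<beta> = poly (pderiv G) \<beta>" unfolding GQ by (simp only: poly_add poly_mult) simp
  have "poly ([:-\<beta>, 1:] * Q) \<alpha> = (\<alpha> - \<beta>) * poly Q \<alpha>" by (simp only: poly_mult) simp
  then show "poly Q \<alpha> = poly G \<alpha> / (\<alpha> - \<beta>)" if "\<alpha> \<noteq> \<beta>" using that unfolding GQ by simp
qed

context
  fixes G :: "'a::alg_closed_field poly"
  assumes G_monic: "lead_coeff G = 1"
    and G_separable: "\<And>\<beta>. poly G \<beta> = 0 \<Longrightarrow> poly (pderiv G) \<beta> \<noteq> 0"
begin

private lemma G_nonzero: "G \<noteq> 0" using G_monic by auto

lemma lagrange_interpolation:
  assumes "degree W < degree G"
  shows "W = (\<Sum>\<beta>\<in>{\<beta>. poly G \<beta> = 0}. smult (poly W \<beta> / poly (pderiv G) \<beta>) (G div [:-\<beta>, 1:]))"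
    (is "W = ?R")
proof (rule ccontr)
  define B where "B = {\<beta>. poly G \<beta> = 0}"
  note Q = linear_factor_quotient[OF _ G_nonzero]
  assume "W \<noteq> ?R"
  then have nz: "W - ?R \<noteq> 0" by simp
  have summand_degree: "degree (smult c (G div [:-\<beta>, 1:])) < degree G" if "poly G \<beta> = 0" for c \<beta>
    using that assms Q(1)[of \<beta>] degree_smult_le[of c "G div [:-\<beta>, 1:]"] by simp
  have "degree ?R < degree G"
  proof (rule degree_sum_less)
    show "0 < degree G" using assms by simp
  qed (rule summand_degree, simp)
  then have deg: "degree (W - ?R) < degree G" using assms by (intro degree_diff_less)
  have "poly ?R \<gamma> = poly W \<gamma>" if "\<gamma> \<in> B" for \<gamma>
  proof -
    have "poly (pderiv G) \<gamma> \<noteq> 0" using that G_separable by (simp add: B_def)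
    then have "poly ?R \<gamma> = (\<Sum>\<beta>\<in>B. if \<beta> = \<gamma> then poly W \<gamma> else 0)"
      unfolding poly_sum poly_smult B_def[symmetric] using that Q(3) Q(4)[of _ \<gamma>]
      by (intro sum.cong) (auto simp: B_def)
    then show ?thesis using that poly_roots_finite[OF G_nonzero] by (simp add: B_def)
  qed
  then have "B \<subseteq> {x. poly (W - ?R) x = 0}" by auto
  then have "card B \<le> card {x. poly (W - ?R) x = 0}" by (intro card_mono poly_roots_finite nz)
  also have "\<dots> \<le> degree (W - ?R)" by (rule card_poly_roots_bound[OF nz])
  finally show False using deg card_roots_separable[OF G_nonzero G_separable] by (simp add: B_def)
qed

lemma coeff_eq_sum_roots:
  assumes "degree W < degree G"
  shows "coeff W (degree G - 1) = (\<Sum>\<beta>\<in>{\<beta>. poly G \<beta> = 0}. poly W \<beta> / poly (pderiv G) \<beta>)"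
  using linear_factor_quotient(1,2)[OF _ G_nonzero] G_monic
  by (subst lagrange_interpolation[OF assms]) (simp add: coeff_sum)

lemma partial_fractions:
  assumes "degree W < degree G" "poly G \<alpha> \<noteq> 0"
  shows "poly W \<alpha> / poly G \<alpha> = (\<Sum>\<beta>\<in>{\<beta>. poly G \<beta> = 0}. poly W \<beta> / poly (pderiv G) \<beta> / (\<alpha> - \<beta>))"
    (is "_ = ?S")
proof -
  have "poly W \<alpha> = (\<Sum>\<beta>\<in>{\<beta>. poly G \<beta> = 0}. poly W \<beta> / poly (pderiv G) \<beta> * poly (G div [:-\<beta>, 1:]) \<alpha>)"
    by (subst lagrange_interpolation[OF assms(1)]) (simp add: poly_sum)
  also have "\<dots> = (\<Sum>\<beta>\<in>{\<beta>. poly G \<beta> = 0}. poly G \<alpha> * (poly W \<beta> / poly (pderiv G) \<beta> / (\<alpha> - \<beta>)))"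
  proof (rule sum.cong[OF refl])
    fix \<beta> assume "\<beta> \<in> {\<beta>. poly G \<beta> = 0}"
    moreover from this have "\<alpha> \<noteq> \<beta>" using assms(2) by auto
    ultimately show "poly W \<beta> / poly (pderiv G) \<beta> * poly (G div [:-\<beta>, 1:]) \<alpha> =
        poly G \<alpha> * (poly W \<beta> / poly (pderiv G) \<beta> / (\<alpha> - \<beta>))"
      using linear_factor_quotient(4)[OF _ G_nonzero] by simp
  qed
  also have "\<dots> = poly G \<alpha> * ?S" by (rule sum_distrib_left[symmetric])
  finally show ?thesis using assms(2) by (metis nonzero_mult_div_cancel_left)
qed

end

interpretation to_ac_hom: field_hom "to_ac :: 'a::field \<Rightarrow> 'a alg_closure"
  by unfold_locales auto

interpretation to_ac_poly_hom: map_poly_inj_idom_divide_hom "to_ac :: 'a::field \<Rightarrow> 'a alg_closure"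
  by unfold_locales

lemma sum_mset_sum_swap: "(\<Sum>x\<in>#A. \<Sum>y\<in>B. f x y) = (\<Sum>y\<in>B. \<Sum>x\<in>#A. f x y)"
  by (induction A) (simp_all add: sum.distrib)

lemma poly_to_ac_cong:
  fixes a b g :: "'a::field poly"
  assumes "[a = b] (mod g)" "poly (map_poly to_ac g) \<beta> = 0"
  shows "poly (map_poly to_ac a) \<beta> = poly (map_poly to_ac b) \<beta>"
proof -
  obtain k where "b = a + g * k" using assms(1) by (metis cong_iff_lin)
  then show ?thesis using assms(2) by (simp add: to_ac_poly_hom.hom_add to_ac_poly_hom.hom_mult)
qed

lemma coprime_imp_no_common_root_to_ac:
  fixes c g :: "'a::field poly"
  assumes "coprime c g" "poly (map_poly to_ac g) \<beta> = 0"
  shows "poly (map_poly to_ac c) \<beta> \<noteq> 0"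
proof
  assume c: "poly (map_poly to_ac c) \<beta> = 0"
  obtain s t where "s * c + t * g = 1" using coprime_imp_bezout[OF assms(1)] by blast
  then have "poly (map_poly to_ac (s * c + t * g)) \<beta> = 1" by simp
  then show False using c assms(2) by (simp add: to_ac_poly_hom.hom_add to_ac_poly_hom.hom_mult)
qed

section \<open>Arithmetic modulo a squarefree polynomial\<close>

locale squarefree_modulus =
  fixes g :: "'a::{field,finite} poly"
  assumes g_monic: "lead_coeff g = 1" and g_squarefree: "squarefree g" and g_degree: "degree g \<ge> 1"
begin

lemma g_nonzero: "g \<noteq> 0" using g_degree by auto

lemma coprime_g_pderiv: "coprime g (pderiv g)"
  by (rule squarefree_imp_coprime_pderiv[OF g_squarefree])

definition reps :: "'a poly set" where "reps = {u. degree u < degree g}"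

lemma finite_reps: "finite reps"
proof -
  have "reps \<subseteq> Poly ` {xs. set xs \<subseteq> UNIV \<and> length xs = degree g}"
  proof
    fix u assume u: "u \<in> reps"
    define xs where "xs = coeffs u @ replicate (degree g - length (coeffs u)) 0"
    have "length (coeffs u) \<le> degree g"
      using u by (cases "u = 0") (auto simp: reps_def length_coeffs_degree)
    then have "length xs = degree g" by (simp add: xs_def)
    moreover have "Poly xs = u" by (simp add: xs_def Poly_append_replicate_zero)
    ultimately show "u \<in> Poly ` {xs. set xs \<subseteq> UNIV \<and> length xs = degree g}" by blast
  qed
  then show ?thesis by (rule finite_subset) (intro finite_imageI finite_lists_length_eq, simp)
qed

lemma zero_in_reps: "0 \<in> reps" using g_degree by (simp add: reps_def)
lemma add_in_reps: "u \<in> reps \<Longrightarrow> v \<in> reps \<Longrightarrow> u + v \<in> reps" by (simp add: reps_def degree_add_less)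
lemma minus_in_reps: "u \<in> reps \<Longrightarrow> - u \<in> reps" by (simp add: reps_def)
lemma mod_in_reps: "u mod g \<in> reps"
  using degree_mod_less[OF g_nonzero, of u] g_degree by (auto simp: reps_def)
lemma mod_eq_self_if_in_reps: "u \<in> reps \<Longrightarrow> u mod g = u" by (simp add: reps_def mod_poly_less)
lemma reps_dvd_imp_eq_0: "u \<in> reps \<Longrightarrow> g dvd u \<Longrightarrow> u = 0"
  using mod_eq_self_if_in_reps[of u] by (simp add: mod_eq_0_iff_dvd[symmetric])

text \<open>This is \<open>\<lambda>(w)\<close>, the sum of the residues of \<open>w / g\<close> at the roots of \<open>g\<close>
  (see \<open>residue_sum_to_ac\<close>).\<close>
definition residue_sum :: "'a poly \<Rightarrow> 'a" where
  "residue_sum w = coeff (w mod g) (degree g - 1)"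

lemma residue_sum_cong: "[w1 = w2] (mod g) \<Longrightarrow> residue_sum w1 = residue_sum w2"
  by (simp add: residue_sum_def cong_def)

lemma residue_sum_add: "residue_sum (a + b) = residue_sum a + residue_sum b"
  by (simp add: residue_sum_def poly_mod_add_left)

lemma residue_sum_smult: "residue_sum (smult c a) = c * residue_sum a"
  by (simp add: residue_sum_def mod_smult_left)

lemma residue_sum_diff: "residue_sum (a - b) = residue_sum a - residue_sum b"
  using residue_sum_add[of a "- b"] residue_sum_smult[of "- 1" b] by simp

lemma residue_sum_0: "residue_sum 0 = 0" by (simp add: residue_sum_def)

text \<open>The pairing \<open>(e, u) \<mapsto> residue_sum (e u)\<close> on \<open>\<bbbF>\<^sub>q[x]/g\<close> is nondegenerate: multiplying
  \<open>e mod g\<close> by a suitable monomial moves its leading coefficient to degree \<open>deg g - 1\<close>.\<close>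
lemma residue_sum_onto:
  assumes "\<not> g dvd e"
  shows "\<exists>u\<in>reps. residue_sum (e * u) = x"
proof -
  define r where "r = e mod g"
  have r0: "r \<noteq> 0" using assms by (simp add: r_def mod_eq_0_iff_dvd)
  have dr: "degree r < degree g" using degree_mod_less'[OF g_nonzero r0[unfolded r_def]] by (simp add: r_def)
  define u :: "'a poly" where "u = monom (x / lead_coeff r) (degree g - 1 - degree r)"
  have "degree u \<le> degree g - 1 - degree r" by (simp add: u_def degree_monom_le)
  then have "u \<in> reps" using g_degree by (simp add: reps_def)
  moreover have "residue_sum (e * u) = x"
  proof (cases "x = 0")
    case False
    have d: "degree (r * u) = degree g - 1"
      using r0 dr False by (simp add: u_def degree_mult_eq degree_monom_eq)
    have "r * u \<in> reps" using d g_degree by (simp add: reps_def)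
    have "residue_sum (e * u) = residue_sum (r * u)"
      by (rule residue_sum_cong) (simp add: r_def cong_def mod_mult_left_eq)
    also have "\<dots> = lead_coeff (r * u)"
      using \<open>r * u \<in> reps\<close> d by (simp add: residue_sum_def mod_eq_self_if_in_reps)
    finally show ?thesis using r0 by (simp add: lead_coeff_mult u_def degree_monom_eq False)
  qed (simp add: u_def residue_sum_0)
  ultimately show ?thesis by blast
qed

definition inv_mod :: "'a poly \<Rightarrow> 'a poly" where
  "inv_mod c = (SOME v. [c * v = 1] (mod g))"

lemma inv_mod:
  assumes "coprime c g"
  shows "[c * inv_mod c = 1] (mod g)"
proof -
  obtain s t where "s * c + t * g = 1" using coprime_imp_bezout[OF assms] by blast
  then have "[c * s = 1] (mod g)"
    by (metis cong_iff_lin mult.commute add.commute)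
  then show ?thesis unfolding inv_mod_def by (rule someI)
qed

lemma inv_mod_unique:
  assumes "[c * v = 1] (mod g)" "[c * w = 1] (mod g)"
  shows "[v = w] (mod g)"
proof -
  have "[v * (c * w) = w * (c * v)] (mod g)" by (simp add: ac_simps)
  then show ?thesis using cong_scalar_left[OF assms(1), of w] cong_scalar_left[OF assms(2), of v]
    by (metis cong_sym cong_trans mult_1_right)
qed

lemma inv_mod_cong:
  assumes "coprime a g" "[a = b] (mod g)"
  shows "[inv_mod a = inv_mod b] (mod g)"
proof -
  have "coprime b g" using assms by (simp add: coprime_cong_cong_left)
  then have "[a * inv_mod b = 1] (mod g)"
    using cong_scalar_right[OF assms(2)] inv_mod cong_trans by blast
  then show ?thesis using inv_mod[OF assms(1)] inv_mod_unique by blast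
qed

lemma inv_mod_mult:
  assumes "coprime a g" "coprime b g"
  shows "[inv_mod (a * b) = inv_mod a * inv_mod b] (mod g)"
proof -
  have "[(a * inv_mod a) * (b * inv_mod b) = 1 * 1] (mod g)"
    using inv_mod assms by (intro cong_mult)
  then have "[(a * b) * (inv_mod a * inv_mod b) = 1] (mod g)" by (simp add: ac_simps)
  then show ?thesis using inv_mod[OF coprime_mult_leftI[OF assms]] inv_mod_unique by blast
qed

lemma coprime_one_plus: "coprime (1 + g * u) g"
  by (rule bezout_imp_coprime[of 1 _ "- u"]) (simp add: algebra_simps)

text \<open>For \<open>f = h / g\<close> this is minus the sum of the residues of \<open>f c' / c\<close> at the roots of \<open>g\<close>,
  that is, the sum of \<open>f\<close> over the roots of \<open>c\<close> (see \<open>root_sum_eq_log_residue\<close>).\<close>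
definition log_residue :: "'a poly \<Rightarrow> 'a poly \<Rightarrow> 'a" where
  "log_residue h c = - residue_sum (h * pderiv c * inv_mod c)"

lemma log_residue_eqI:
  assumes "coprime a g" "[a = b] (mod g)" "[h * pderiv a = h * pderiv b] (mod g)"
  shows "log_residue h a = log_residue h b"
  unfolding log_residue_def using assms inv_mod_cong by (metis cong_mult residue_sum_cong)

lemma log_residue_cong_square:
  assumes "coprime a g" "[a = b] (mod g ^ 2)"
  shows "log_residue h a = log_residue h b"
proof (rule log_residue_eqI[OF assms(1)])
  obtain k where "b = a + g ^ 2 * k"
    using assms(2) by (metis cong_iff_lin power2_eq_square add.commute)
  then have "h * pderiv a - h * pderiv b = g * (- h * (g * pderiv k + 2 * k * pderiv g))"
    by (simp add: pderiv_add pderiv_mult power2_eq_square algebra_simps)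
  then show "[h * pderiv a = h * pderiv b] (mod g)"
    unfolding cong_iff_dvd_diff by simp
  show "[a = b] (mod g)" using assms(2) by (rule cong_dvd_modulus) (simp add: power2_eq_square)
qed

lemma log_residue_mult:
  assumes "coprime a g" "coprime b g"
  shows "log_residue h (a * b) = log_residue h a + log_residue h b"
proof -
  have "[h * pderiv (a * b) * inv_mod (a * b) = h * pderiv (a * b) * (inv_mod a * inv_mod b)] (mod g)"
    using inv_mod_mult[OF assms] by (rule cong_scalar_left)
  also have "h * pderiv (a * b) * (inv_mod a * inv_mod b) =
      (h * pderiv b * inv_mod b) * (a * inv_mod a) + (h * pderiv a * inv_mod a) * (b * inv_mod b)"
    by (simp add: pderiv_mult algebra_simps)
  also have "[\<dots> = h * pderiv b * inv_mod b * 1 + h * pderiv a * inv_mod a * 1] (mod g)"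
    using inv_mod assms by (intro cong_add cong_scalar_left)
  finally show ?thesis
    unfolding log_residue_def by (simp add: residue_sum_cong residue_sum_add)
qed

lemma log_residue_one_plus: "log_residue h (1 + g * u) = - residue_sum (h * pderiv g * u)"
proof -
  have "[(1 + g * u) * 1 = 1] (mod g)" by (simp add: cong_def)
  then have "[inv_mod (1 + g * u) = 1] (mod g)"
    using inv_mod[OF coprime_one_plus] inv_mod_unique cong_sym by blast
  moreover have "[pderiv (1 + g * u) = u * pderiv g] (mod g)"
    by (simp add: pderiv_add pderiv_mult cong_def)
  ultimately have "[h * pderiv (1 + g * u) * inv_mod (1 + g * u) = h * (u * pderiv g) * 1] (mod g)"
    by (intro cong_mult cong_refl)
  then show ?thesis unfolding log_residue_def by (simp add: residue_sum_cong ac_simps)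
qed

lemma log_residue_const: "log_residue h [:a:] = 0"
  by (simp add: log_residue_def pderiv_pCons residue_sum_0)

text \<open>Frobenius is injective on \<open>\<bbbF>\<^sub>q[x]/g\<close> because \<open>g\<close> is squarefree, hence bijective.\<close>
lemma exists_power_CHAR_cong:
  assumes "coprime c g"
  shows "\<exists>b. coprime b g \<and> [b ^ CHAR('a) = c] (mod g)"
proof -
  define F where "F u = u ^ CHAR('a) mod g" for u
  have p: "CHAR('a) > 0" using prime_gt_0_nat[OF prime_CHAR_finite_field] .
  have "inj_on F reps"
  proof (rule inj_onI)
    fix u w assume u: "u \<in> reps" and w: "w \<in> reps" and "F u = F w"
    moreover have "prime CHAR('a poly)" using prime_CHAR_finite_field[where 'a='a] by simp
    ultimately have "g dvd (u - w) ^ CHAR('a)"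
      using freshmans_dream_diff[of u w] by (simp add: F_def mod_eq_dvd_iff)
    then have "g dvd u - w" using squarefree_dvd_power_imp_dvd[OF g_squarefree _ p] by blast
    moreover have "u - w \<in> reps" using add_in_reps[OF u minus_in_reps[OF w]] by simp
    ultimately show "u = w" using reps_dvd_imp_eq_0 by fastforce
  qed
  moreover have "F ` reps \<subseteq> reps" by (auto simp: F_def mod_in_reps)
  ultimately have "F ` reps = reps" by (rule endo_inj_surj[OF finite_reps, rotated])
  then obtain u where "F u = c mod g" using mod_in_reps[of c] by (metis imageE)
  then have "u ^ CHAR('a) mod g = c mod g" by (simp add: F_def)
  then have cu: "[u ^ CHAR('a) = c] (mod g)" by (simp add: cong_def)
  then have "coprime (u ^ CHAR('a)) g" using assms by (simp add: coprime_cong_cong_left)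
  moreover have "u dvd u ^ CHAR('a)" using p by (simp add: dvd_power)
  ultimately have "coprime u g" unfolding coprime_def by (meson dvd_trans)
  then show ?thesis using cu by blast
qed

abbreviation g_ac :: "'a alg_closure poly" where "g_ac \<equiv> map_poly to_ac g"

lemma g_ac_monic: "lead_coeff g_ac = 1"
  using g_monic by simp

lemma g_ac_separable: "poly g_ac \<beta> = 0 \<Longrightarrow> poly (pderiv g_ac) \<beta> \<noteq> 0"
  using coprime_imp_no_common_root_to_ac[of "pderiv g" g] coprime_g_pderiv
  by (simp add: coprime_commute to_ac_hom.map_poly_pderiv)

lemma residue_sum_to_ac:
  "to_ac (residue_sum w) =
     (\<Sum>\<beta>\<in>{\<beta>. poly g_ac \<beta> = 0}. poly (map_poly to_ac w) \<beta> / poly (pderiv g_ac) \<beta>)"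
proof -
  have "degree (map_poly to_ac (w mod g)) < degree g_ac"
    using mod_in_reps[of w] by (simp add: reps_def)
  from coeff_eq_sum_roots[OF g_ac_monic g_ac_separable this]
  have "to_ac (residue_sum w) =
      (\<Sum>\<beta>\<in>{\<beta>. poly g_ac \<beta> = 0}. poly (map_poly to_ac (w mod g)) \<beta> / poly (pderiv g_ac) \<beta>)"
    by (simp add: residue_sum_def)
  also have "\<dots> = (\<Sum>\<beta>\<in>{\<beta>. poly g_ac \<beta> = 0}. poly (map_poly to_ac w) \<beta> / poly (pderiv g_ac) \<beta>)"
    using poly_to_ac_cong[of "w mod g" w g] by (intro sum.cong) (auto simp: cong_def)
  finally show ?thesis .
qed

lemma log_residue_to_ac:
  assumes c: "coprime c g"
  shows "to_ac (log_residue h c) =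
    - (\<Sum>\<beta>\<in>{\<beta>. poly g_ac \<beta> = 0}. poly (map_poly to_ac h) \<beta> * poly (pderiv (map_poly to_ac c)) \<beta> /
          poly (map_poly to_ac c) \<beta> / poly (pderiv g_ac) \<beta>)"
proof -
  have "poly (map_poly to_ac (inv_mod c)) \<beta> = 1 / poly (map_poly to_ac c) \<beta>" if "poly g_ac \<beta> = 0" for \<beta>
    using poly_to_ac_cong[OF inv_mod[OF c] that] coprime_imp_no_common_root_to_ac[OF c that]
    by (simp add: to_ac_poly_hom.hom_mult field_simps)
  then have "(\<Sum>\<beta>\<in>{\<beta>. poly g_ac \<beta> = 0}.
        poly (map_poly to_ac (h * pderiv c * inv_mod c)) \<beta> / poly (pderiv g_ac) \<beta>) =
      (\<Sum>\<beta>\<in>{\<beta>. poly g_ac \<beta> = 0}. poly (map_poly to_ac h) \<beta> * poly (pderiv (map_poly to_ac c)) \<beta> /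
          poly (map_poly to_ac c) \<beta> / poly (pderiv g_ac) \<beta>)"
    by (intro sum.cong) (simp_all add: to_ac_poly_hom.hom_mult to_ac_hom.map_poly_pderiv)
  then show ?thesis by (simp add: log_residue_def residue_sum_to_ac)
qed

text \<open>The residue theorem for \<open>f c' / c\<close> with \<open>f = h / g\<close>: expanding \<open>f\<close> in partial fractions over
  the roots \<open>\<beta>\<close> of \<open>g\<close>, summing over the roots \<open>\<alpha>\<close> of \<open>c\<close> and exchanging the sums turns
  \<open>\<Sum>\<^sub>\<alpha> f(\<alpha>)\<close> into \<open>- \<Sum>\<^sub>\<beta> h(\<beta>) c'(\<beta>) / (g'(\<beta>) c(\<beta>))\<close>.\<close>
theorem root_sum_eq_log_residue:
  assumes dh: "degree h < degree g" and c: "coprime c g"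
  shows "root_sum h g c = log_residue h c"
proof -
  define H C where "H = map_poly to_ac h" and "C = map_poly to_ac c"
  define B where "B = {\<beta>. poly g_ac \<beta> = 0}"
  define r where "r \<beta> = poly H \<beta> / poly (pderiv g_ac) \<beta>" for \<beta>
  have C0: "C \<noteq> 0" using c g_degree by (auto simp: C_def)
  have C_on_B: "poly C \<beta> \<noteq> 0" if "\<beta> \<in> B" for \<beta>
    using coprime_imp_no_common_root_to_ac[OF c] that by (simp add: B_def C_def)
  have g_on_roots: "poly g_ac \<alpha> \<noteq> 0" if "\<alpha> \<in># proots C" for \<alpha>
    using that C_on_B C0 by (auto simp: B_def)
  have "(\<Sum>\<alpha>\<in>{\<alpha>. poly C \<alpha> = 0}. of_nat (order \<alpha> C) * (poly H \<alpha> / poly g_ac \<alpha>)) =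
        (\<Sum>\<alpha>\<in>#proots C. poly H \<alpha> / poly g_ac \<alpha>)"
    using sum_count_eq_sum_mset[OF poly_roots_finite[OF C0], of "proots C" "\<lambda>\<alpha>. poly H \<alpha> / poly g_ac \<alpha>"] C0
    by simp
  then have "root_sum h g c = of_ac (\<Sum>\<alpha>\<in>#proots C. poly H \<alpha> / poly g_ac \<alpha>)"
    unfolding root_sum_def H_def C_def by simp
  also have "(\<Sum>\<alpha>\<in>#proots C. poly H \<alpha> / poly g_ac \<alpha>) = (\<Sum>\<alpha>\<in>#proots C. \<Sum>\<beta>\<in>B. r \<beta> / (\<alpha> - \<beta>))"
    using partial_fractions[OF g_ac_monic g_ac_separable] dh g_on_roots
    by (intro arg_cong[where f = sum_mset] image_mset_cong) (simp add: B_def r_def H_def)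
  also have "\<dots> = (\<Sum>\<beta>\<in>B. \<Sum>\<alpha>\<in>#proots C. - r \<beta> * (1 / (\<beta> - \<alpha>)))"
  proof -
    have swap_sign: "x / (\<alpha> - \<beta>) = - x * (1 / (\<beta> - \<alpha>))" for x \<alpha> \<beta> :: "'a alg_closure"
      by (cases "\<alpha> = \<beta>") (simp_all add: field_simps)
    show ?thesis unfolding sum_mset_sum_swap
      by (intro sum.cong refl arg_cong[where f = sum_mset] image_mset_cong) (rule swap_sign)
  qed
  also have "\<dots> = (\<Sum>\<beta>\<in>B. - r \<beta> * (\<Sum>\<alpha>\<in>#proots C. 1 / (\<beta> - \<alpha>)))"
    by (simp only: sum_mset_distrib_left)
  also have "\<dots> = to_ac (log_residue h c)"
    unfolding log_residue_to_ac[OF c] sum_negf[symmetric] B_def[symmetric] H_def[symmetric] C_def[symmetric]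
    using C_on_B by (intro sum.cong) (simp_all add: logderiv_eq_sum_proots[symmetric] r_def)
  finally show ?thesis by simp
qed

lemma one_plus_cong_square: "[1 + g * u = 1 + g * (u mod g)] (mod g ^ 2)"
proof -
  have "1 + g * (u mod g) = 1 + g * u + g ^ 2 * (- (u div g))"
    by (simp add: power2_eq_square algebra_simps flip: minus_div_mult_eq_mod)
  then show ?thesis unfolding cong_iff_lin by blast
qed

lemma one_plus_mult_cong_square: "[(1 + g * u) * (1 + g * v) = 1 + g * (u + v)] (mod g ^ 2)"
proof -
  have "1 + g * (u + v) = (1 + g * u) * (1 + g * v) + g ^ 2 * (- (u * v))"
    by (simp add: power2_eq_square algebra_simps)
  then show ?thesis unfolding cong_iff_lin by blast
qed

lemma cong_imp_cong_mult_one_plus: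
  assumes "coprime a g" "[a = b] (mod g)"
  shows "\<exists>u. [b = a * (1 + g * u)] (mod g ^ 2)"
proof -
  obtain m where m: "b = a + g * m" using assms(2) unfolding cong_iff_lin by blast
  obtain k where k: "1 = a * inv_mod a + g * k" using inv_mod[OF assms(1)] unfolding cong_iff_lin by blast
  have "a * (1 + g * (m * inv_mod a)) = b + g ^ 2 * (- (m * k)) + g * m * (a * inv_mod a + g * k - 1)"
    by (simp add: m power2_eq_square algebra_simps)
  then have "a * (1 + g * (m * inv_mod a)) = b + g ^ 2 * (- (m * k))"
    by (simp add: k[symmetric])
  then have "[b = a * (1 + g * (m * inv_mod a))] (mod g ^ 2)" unfolding cong_iff_lin by blast
  then show ?thesis ..
qed

end

section \<open>The characters \<open>\<chi>\<^sub>f\<close>\<close>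

lemma dirichlet_char_cong:
  "dirichlet_char M \<chi> \<Longrightarrow> [a = b] (mod M) \<Longrightarrow> \<chi> a = \<chi> b"
  unfolding dirichlet_char_def cong_def by blast

lemma dirichlet_char_mult:
  "dirichlet_char M \<chi> \<Longrightarrow> coprime a M \<Longrightarrow> coprime b M \<Longrightarrow> \<chi> (a * b) = \<chi> a * \<chi> b"
  unfolding dirichlet_char_def by blast

lemma dirichlet_char_power:
  fixes a M :: "'a::field poly"
  assumes "dirichlet_char M \<chi>" "coprime a M"
  shows "\<chi> (a ^ n) = \<chi> a ^ n"
proof (induction n)
  case 0
  have "\<chi> 1 = 1" using assms(1) unfolding dirichlet_char_def by blast
  then show ?case by simp
next
  case (Suc n)
  then show ?case
    using dirichlet_char_mult[OF assms(1,2) coprime_power_leftI[OF assms(2)]] by simp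
qed

locale squarefree_modulus_char = squarefree_modulus g + additive_character \<psi>
  for g :: "'a::{field,finite} poly" and \<psi> :: "'a \<Rightarrow> complex"
begin

definition chi :: "'a poly \<Rightarrow> 'a poly \<Rightarrow> complex" where
  "chi h c = (if coprime c g then Psi \<psi> (log_residue h c) else 0)"

lemma chi_f_eq_chi: "degree h < degree g \<Longrightarrow> chi_f \<psi> h g = chi h"
  by (rule ext) (simp add: chi_f_def chi_def Psi_def root_sum_eq_log_residue)

lemma chi_mult: "coprime a g \<Longrightarrow> coprime b g \<Longrightarrow> chi h (a * b) = chi h a * chi h b"
  by (simp add: chi_def coprime_mult_leftI log_residue_mult Psi_add)

lemma chi_cong_square: "[a = b] (mod g ^ 2) \<Longrightarrow> chi h a = chi h b"
  using log_residue_cong_square[of a b h] cong_dvd_modulus[of a b "g ^ 2" g]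
  by (auto simp: chi_def coprime_cong_cong_left power2_eq_square)

lemma chi_one_plus: "chi h (1 + g * u) = Psi \<psi> (- residue_sum (h * pderiv g * u))"
  by (simp add: chi_def coprime_one_plus log_residue_one_plus)

lemma chi_const: "a \<noteq> 0 \<Longrightarrow> chi h [:a:] = 1"
  by (simp add: chi_def log_residue_const Psi_0 is_unit_left_imp_coprime is_unit_pCons_iff)

lemma chi_1: "chi h 1 = 1"
  using chi_const[of 1 h] by (simp add: one_pCons)

lemma chi_power_CHAR: "coprime a g \<Longrightarrow> chi h a ^ CHAR('a) = 1"
  by (simp add: chi_def Psi_power_CHAR)

lemma dirichlet_char_chi: "dirichlet_char (g ^ 2) (chi h)"
  unfolding dirichlet_char_def coprime_power2_right_iff
proof (intro conjI allI impI)
  show "chi h a = chi h b" if "a mod g ^ 2 = b mod g ^ 2" for a b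
    using that by (intro chi_cong_square) (simp add: cong_def)
  show "chi h a = 0" if "\<not> coprime a g" for a
    using that by (simp add: chi_def)
  show "chi h (a * b) = chi h a * chi h b" if "coprime a g" "coprime b g" for a b
    using that by (rule chi_mult)
  show "chi h 1 = 1" by (rule chi_1)
qed

lemma chi_one_plus_nontrivial:
  assumes "\<not> g dvd h * pderiv g * v"
  shows "\<exists>u. chi h (1 + g * (v * u)) \<noteq> 1"
proof -
  obtain x where "Psi \<psi> (- x) \<noteq> 1" using Psi_nontrivial by (metis minus_minus)
  moreover obtain u where "residue_sum (h * pderiv g * v * u) = x" using residue_sum_onto[OF assms] by blast
  ultimately show ?thesis by (metis chi_one_plus mult.assoc)
qed

lemma primitive_chi:
  assumes h: "coprime h g"
  shows "primitive_dirichlet_char (g ^ 2) (chi h)"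
  unfolding primitive_dirichlet_char_def
proof (intro conjI dirichlet_char_chi notI, elim exE conjE)
  fix M assume M: "lead_coeff M = 1" "M dvd g ^ 2" "M \<noteq> g ^ 2"
    and factors: "\<forall>a b. coprime a (g ^ 2) \<longrightarrow> coprime b (g ^ 2) \<longrightarrow> a mod M = b mod M \<longrightarrow> chi h a = chi h b"
  obtain P g1 where P: "irreducible P" "g = P * g1" "M dvd P * g1 ^ 2"
    using proper_monic_divisor_of_square[OF g_monic M] by blast
  have "\<not> g dvd h * pderiv g * g1"
  proof
    assume "g dvd h * pderiv g * g1"
    then have "g dvd h * (pderiv g * g1)" by (simp only: mult.assoc)
    then have "P * g1 dvd pderiv g * g1"
      using h P(2) coprime_dvd_mult_imp_dvd coprime_commute by metis
    moreover have "g1 \<noteq> 0" using P(2) g_nonzero by auto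
    ultimately have "P dvd pderiv g" by simp
    moreover have "P dvd g" "\<not> is_unit P" using P(1,2) irreducible_not_unit by auto
    ultimately show False using coprime_g_pderiv unfolding coprime_def by blast
  qed
  then obtain u where u: "chi h (1 + g * (g1 * u)) \<noteq> 1" using chi_one_plus_nontrivial by blast
  have "P * g1 ^ 2 dvd g * (g1 * u)" using P(2) by (simp add: power2_eq_square mult.assoc)
  then have "M dvd g * (g1 * u)" using P(3) dvd_trans by blast
  then have "(1 + g * (g1 * u)) mod M = 1 mod M" by (simp add: mod_eq_dvd_iff)
  then have "chi h (1 + g * (g1 * u)) = chi h 1"
    using factors coprime_one_plus by (simp add: coprime_power2_right_iff)
  then show False using u chi_1 by simp
qed

text \<open>If \<open>P\<close> divides both \<open>h\<close> and \<open>g = P g\<^sub>1\<close>, then \<open>chi h\<close> only depends on residues modulo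
  \<open>P g\<^sub>1\<^sup>2\<close>: the derivative of a multiple of \<open>P g\<^sub>1\<^sup>2\<close> is a multiple of \<open>g\<^sub>1\<close>, and \<open>h\<close> supplies the
  missing factor \<open>P\<close>.\<close>
lemma chi_cong_smaller_modulus:
  assumes "g = P * g1" "h = P * h1" "[a = b] (mod P * g1 ^ 2)"
  shows "chi h a = chi h b"
proof -
  have g_dvd: "g dvd P * g1 ^ 2" using assms(1) by (simp add: power2_eq_square)
  obtain k where k: "b = a + P * g1 ^ 2 * k" using assms(3) unfolding cong_iff_lin by blast
  have "h * pderiv b = h * pderiv a + g * (h1 * (pderiv P * g1 * k + P * (2 * pderiv g1 * k + g1 * pderiv k)))"
    by (simp add: k assms(1,2) pderiv_add pderiv_mult power2_eq_square algebra_simps)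
  then have "[h * pderiv a = h * pderiv b] (mod g)" unfolding cong_iff_lin by blast
  moreover have "[a = b] (mod g)" using assms(3) g_dvd by (rule cong_dvd_modulus)
  ultimately show ?thesis
    using log_residue_eqI[of a b h] by (simp add: chi_def coprime_cong_cong_left)
qed

lemma not_coprime_imp_not_primitive_chi:
  assumes "\<not> coprime h g"
  shows "\<not> primitive_dirichlet_char (g ^ 2) (chi h)"
proof -
  obtain c where c: "c dvd h" "c dvd g" "\<not> is_unit c" using assms by (rule not_coprimeE)
  then have "degree c > 0" using g_nonzero is_unit_iff_degree by fastforce
  then obtain P r where P: "irreducible P" "c = P * r" "lead_coeff P = 1"
    using irreducible_monic_factor by blast
  then obtain g1 h1 where g1: "g = P * g1" and h1: "h = P * h1"
    using c by (metis dvd_mult_left dvdE)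
  define M where "M = P * g1 ^ 2"
  have "lead_coeff M = 1"
    using g_monic P(3) by (simp add: M_def g1 lead_coeff_mult lead_coeff_power)
  moreover have "g ^ 2 = M * P" by (simp add: M_def g1 power2_eq_square ac_simps)
  then have "M dvd g ^ 2" "M \<noteq> g ^ 2"
    using P(1) g_nonzero by (auto simp: irreducible_def)
  moreover have "\<forall>a b. coprime a (g ^ 2) \<longrightarrow> coprime b (g ^ 2) \<longrightarrow> a mod M = b mod M \<longrightarrow> chi h a = chi h b"
  proof (intro allI impI)
    fix a b assume "a mod M = b mod M"
    then show "chi h a = chi h b" by (intro chi_cong_smaller_modulus[OF g1 h1]) (simp add: cong_def M_def)
  qed
  ultimately have "\<exists>M. lead_coeff M = 1 \<and> M dvd g ^ 2 \<and> M \<noteq> g ^ 2 \<and>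
      (\<forall>a b. coprime a (g ^ 2) \<longrightarrow> coprime b (g ^ 2) \<longrightarrow> a mod M = b mod M \<longrightarrow> chi h a = chi h b)"
    by blast
  then show ?thesis unfolding primitive_dirichlet_char_def by blast
qed

lemma chi_inj:
  assumes "degree h1 < degree g" "degree h2 < degree g" "chi h1 = chi h2"
  shows "h1 = h2"
proof -
  have "g dvd (h1 - h2) * pderiv g"
  proof (rule ccontr)
    assume "\<not> ?thesis"
    then obtain u where u: "chi (h1 - h2) (1 + g * u) \<noteq> 1"
      using chi_one_plus_nontrivial[of "h1 - h2" 1] by auto
    have "- residue_sum (h1 * pderiv g * u) =
        - residue_sum ((h1 - h2) * pderiv g * u) + - residue_sum (h2 * pderiv g * u)"
      using residue_sum_diff[of "h1 * pderiv g * u" "h2 * pderiv g * u"] by (simp add: algebra_simps)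
    then have "chi h1 (1 + g * u) = chi (h1 - h2) (1 + g * u) * chi h2 (1 + g * u)"
      unfolding chi_one_plus by (simp only: Psi_add)
    then show False using u assms(3) Psi_nonzero by (simp add: chi_one_plus)
  qed
  then have "g dvd pderiv g * (h1 - h2)" by (simp add: mult.commute)
  then have "g dvd h1 - h2" by (rule coprime_dvd_mult_imp_dvd[OF coprime_g_pderiv])
  moreover have "h1 - h2 \<in> reps" using assms(1,2) by (simp add: reps_def degree_diff_less)
  ultimately show ?thesis using reps_dvd_imp_eq_0 by fastforce
qed

lemma Psi_residue_sum_orthogonal:
  assumes "u \<in> reps"
  shows "(\<Sum>e\<in>reps. Psi \<psi> (residue_sum (e * u))) = (if u = 0 then of_nat (card reps) else 0)"
proof (cases "u = 0")
  case False
  then have "\<not> g dvd u" using assms reps_dvd_imp_eq_0 by blast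
  moreover obtain x where x: "Psi \<psi> x \<noteq> 1" using Psi_nontrivial by blast
  ultimately obtain e0 where e0: "e0 \<in> reps" "residue_sum (u * e0) = x"
    using residue_sum_onto by blast
  then have "Psi \<psi> (residue_sum (e0 * u)) \<noteq> 1" using x by (simp add: mult.commute)
  then have "(\<Sum>e\<in>reps. Psi \<psi> (residue_sum (e * u))) = 0"
    by (intro sum_nontrivial_char_eq_0[OF finite_reps add_in_reps minus_in_reps _ e0(1)])
      (simp_all add: distrib_right residue_sum_add Psi_add)
  then show ?thesis using False by simp
qed (simp add: residue_sum_0 Psi_0)

text \<open>Every additive character of \<open>\<bbbF>\<^sub>q[x]/g\<close> is \<open>u \<mapsto> \<Psi>(- residue_sum (e u))\<close>: by
  orthogonality, \<open>\<Sum>\<^sub>e \<Sum>\<^sub>u \<phi>(u) \<Psi>(residue_sum (e u)) = |\<bbbF>\<^sub>q[x]/g|\<close>, so some inner sum is nonzero,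
  which forces its summand \<open>\<phi> \<cdot> \<Psi>(residue_sum (e \<cdot>))\<close> to be the trivial character.\<close>
lemma additive_char_reps_eq:
  fixes \<phi> :: "'a poly \<Rightarrow> complex"
  assumes add: "\<And>u v. \<phi> (u + v) = \<phi> u * \<phi> v" and "\<phi> 0 = 1"
  shows "\<exists>e\<in>reps. \<forall>u\<in>reps. \<phi> u = Psi \<psi> (- residue_sum (e * u))"
proof -
  define K where "K e u = Psi \<psi> (residue_sum (e * u))" for e u
  have "(\<Sum>e\<in>reps. \<Sum>u\<in>reps. \<phi> u * K e u) = (\<Sum>u\<in>reps. \<phi> u * (\<Sum>e\<in>reps. K e u))"
    by (subst sum.swap) (simp add: sum_distrib_left)
  also have "\<dots> = (\<Sum>u\<in>reps. if u = 0 then of_nat (card reps) else 0)"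
    using Psi_residue_sum_orthogonal assms(2) by (intro sum.cong) (simp_all add: K_def)
  also have "\<dots> \<noteq> 0" using zero_in_reps finite_reps by (auto simp: card_eq_0_iff)
  finally obtain e where e: "e \<in> reps" "(\<Sum>u\<in>reps. \<phi> u * K e u) \<noteq> 0"
    using sum.neutral by (metis (no_types, lifting))
  have "K e u * \<phi> u = 1" if "u \<in> reps" for u
  proof (rule ccontr)
    assume "K e u * \<phi> u \<noteq> 1"
    then have "(\<Sum>u\<in>reps. \<phi> u * K e u) = 0"
      by (intro sum_nontrivial_char_eq_0[OF finite_reps add_in_reps minus_in_reps _ that])
        (simp_all add: add K_def distrib_left residue_sum_add Psi_add ac_simps)
    then show False using e(2) by simp
  qed
  then show ?thesis
    using e(1) by (metis K_def Psi_minus inverse_unique)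
qed

lemma dirichlet_char_eq_chi_on_one_plus:
  assumes \<chi>: "dirichlet_char (g ^ 2) \<chi>"
  shows "\<exists>h\<in>reps. \<forall>u. \<chi> (1 + g * u) = chi h (1 + g * u)"
proof -
  have coprime: "coprime (1 + g * u) (g ^ 2)" for u
    by (simp add: coprime_power2_right_iff coprime_one_plus)
  have "\<chi> (1 + g * (u + v)) = \<chi> (1 + g * u) * \<chi> (1 + g * v)" for u v
    using dirichlet_char_cong[OF \<chi> one_plus_mult_cong_square] dirichlet_char_mult[OF \<chi> coprime coprime]
    by simp
  moreover have "\<chi> 1 = 1" using \<chi> unfolding dirichlet_char_def by blast
  ultimately obtain e where e: "e \<in> reps" "\<And>u. u \<in> reps \<Longrightarrow> \<chi> (1 + g * u) = Psi \<psi> (- residue_sum (e * u))"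
    using additive_char_reps_eq[of "\<lambda>u. \<chi> (1 + g * u)"] by auto
  define h where "h = (e * inv_mod (pderiv g)) mod g"
  have "[h = e * inv_mod (pderiv g)] (mod g)" by (simp add: h_def cong_def)
  then have "[h * pderiv g = e * inv_mod (pderiv g) * pderiv g] (mod g)" by (rule cong_scalar_right)
  also have "e * inv_mod (pderiv g) * pderiv g = e * (pderiv g * inv_mod (pderiv g))" by (simp add: ac_simps)
  also have "[\<dots> = e * 1] (mod g)"
    using inv_mod coprime_g_pderiv by (intro cong_scalar_left) (simp add: coprime_commute)
  finally have h: "[h * pderiv g * u = e * u] (mod g)" for u by (intro cong_scalar_right) simp
  have "\<chi> (1 + g * u) = chi h (1 + g * u)" for u
  proof -
    have "\<chi> (1 + g * u) = \<chi> (1 + g * (u mod g))"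
      by (rule dirichlet_char_cong[OF \<chi> one_plus_cong_square])
    also have "\<dots> = Psi \<psi> (- residue_sum (e * (u mod g)))" by (rule e(2)[OF mod_in_reps])
    also have "residue_sum (e * (u mod g)) = residue_sum (h * pderiv g * (u mod g))"
      by (rule residue_sum_cong[OF cong_sym[OF h]])
    also have "Psi \<psi> (- \<dots>) = chi h (1 + g * (u mod g))" by (simp add: chi_one_plus)
    also have "\<dots> = chi h (1 + g * u)" by (rule chi_cong_square[OF cong_sym[OF one_plus_cong_square]])
    finally show ?thesis .
  qed
  then show ?thesis using mod_in_reps h_def by blast
qed

text \<open>Two characters of order \<open>p\<close> modulo \<open>g\<^sup>2\<close> that agree on \<open>1 + g \<bbbF>\<^sub>q[x]\<close> agree everywhere:
  every unit is a \<open>p\<close>-th power times an element of \<open>1 + g \<bbbF>\<^sub>q[x]\<close>.\<close>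
lemma dirichlet_char_eqI_one_plus:
  assumes \<chi>1: "dirichlet_char (g ^ 2) \<chi>1" "\<And>a. coprime a g \<Longrightarrow> \<chi>1 a ^ CHAR('a) = 1"
    and \<chi>2: "dirichlet_char (g ^ 2) \<chi>2" "\<And>a. coprime a g \<Longrightarrow> \<chi>2 a ^ CHAR('a) = 1"
    and one_plus: "\<And>u. \<chi>1 (1 + g * u) = \<chi>2 (1 + g * u)"
  shows "\<chi>1 = \<chi>2"
proof
  fix c
  show "\<chi>1 c = \<chi>2 c"
  proof (cases "coprime c g")
    case True
    obtain b where b: "coprime b g" "[b ^ CHAR('a) = c] (mod g)"
      using exists_power_CHAR_cong[OF True] by blast
    then obtain u where u: "[c = b ^ CHAR('a) * (1 + g * u)] (mod g ^ 2)"
      using cong_imp_cong_mult_one_plus coprime_power_leftI by blast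
    have "\<chi> c = \<chi> (1 + g * u)"
      if "dirichlet_char (g ^ 2) \<chi>" "\<And>a. coprime a g \<Longrightarrow> \<chi> a ^ CHAR('a) = 1" for \<chi>
    proof -
      have "coprime (b ^ CHAR('a)) (g ^ 2)" "coprime (1 + g * u) (g ^ 2)"
        using b(1) by (simp_all add: coprime_power2_right_iff coprime_power_leftI coprime_one_plus)
      then have "\<chi> c = \<chi> (b ^ CHAR('a)) * \<chi> (1 + g * u)"
        using dirichlet_char_cong[OF that(1) u] dirichlet_char_mult[OF that(1)] by simp
      moreover have "\<chi> (b ^ CHAR('a)) = 1"
        using dirichlet_char_power[OF that(1)] that(2)[OF b(1)] b(1) by (simp add: coprime_power2_right_iff)
      ultimately show ?thesis by simp
    qed
    then show ?thesis using \<chi>1 \<chi>2 one_plus by metis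
  next
    case False
    then have "\<chi>1 c = 0" "\<chi>2 c = 0"
      using \<chi>1(1) \<chi>2(1) unfolding dirichlet_char_def coprime_power2_right_iff by blast+
    then show ?thesis by simp
  qed
qed

lemma chi_onto:
  assumes "primitive_dirichlet_char (g ^ 2) \<chi>" "\<And>a. coprime a g \<Longrightarrow> \<chi> a ^ CHAR('a) = 1"
  shows "\<exists>h. coprime h g \<and> degree h < degree g \<and> chi h = \<chi>"
proof -
  have \<chi>: "dirichlet_char (g ^ 2) \<chi>" using assms(1) by (simp add: primitive_dirichlet_char_def)
  obtain h where h: "h \<in> reps" "\<And>u. \<chi> (1 + g * u) = chi h (1 + g * u)"
    using dirichlet_char_eq_chi_on_one_plus[OF \<chi>] by blast
  have "chi h = \<chi>"
    using dirichlet_char_eqI_one_plus[OF dirichlet_char_chi chi_power_CHAR \<chi> assms(2)] h(2) by simp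
  moreover have "coprime h g" using not_coprime_imp_not_primitive_chi assms(1) \<open>chi h = \<chi>\<close> by blast
  ultimately show ?thesis using h(1) by (auto simp: reps_def)
qed

end

theorem mainTheorem7:
  fixes g :: "'a::{field,finite} poly" and \<psi> :: "'a \<Rightarrow> complex" and p :: nat
  assumes "prime p" and "p > 2" and "CHAR('a) = p"
    and "nontrivial_additive_char \<psi>"
    and "lead_coeff g = 1" and "squarefree g" and "degree g \<ge> 1"
  shows "bij_betw (\<lambda>h. chi_f \<psi> h g)
           {h. coprime h g \<and> degree h < degree g}
           {\<chi>. primitive_dirichlet_char (g ^ 2) \<chi> \<and>
                (\<forall>a. coprime a (g ^ 2) \<longrightarrow> \<chi> a ^ p = 1)}
         \<and> (\<forall>h. coprime h g \<and> degree h < degree g \<longrightarrow> even_char (chi_f \<psi> h g))"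
proof -
  interpret squarefree_modulus_char g \<psi>
    using assms by unfold_locales simp_all
  let ?H = "{h. coprime h g \<and> degree h < degree g}"
  let ?X = "{\<chi>. primitive_dirichlet_char (g ^ 2) \<chi> \<and> (\<forall>a. coprime a (g ^ 2) \<longrightarrow> \<chi> a ^ p = 1)}"
  have chi_f: "chi_f \<psi> h g = chi h" if "h \<in> ?H" for h
    using that chi_f_eq_chi by simp
  have "inj_on (\<lambda>h. chi_f \<psi> h g) ?H"
    using chi_inj by (auto simp: inj_on_def chi_f)
  moreover have "(\<lambda>h. chi_f \<psi> h g) ` ?H = ?X"
  proof (intro equalityI subsetI)
    show "\<chi> \<in> ?X" if "\<chi> \<in> (\<lambda>h. chi_f \<psi> h g) ` ?H" for \<chi>
      using that primitive_chi chi_power_CHAR assms(3) by (auto simp: chi_f coprime_power2_right_iff)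
    show "\<chi> \<in> (\<lambda>h. chi_f \<psi> h g) ` ?H" if "\<chi> \<in> ?X" for \<chi>
      using that chi_onto[of \<chi>] assms(3) chi_f by (force simp: coprime_power2_right_iff)
  qed
  moreover have "even_char (chi_f \<psi> h g)" if "h \<in> ?H" for h
    using that chi_const by (simp add: chi_f even_char_def)
  ultimately show ?thesis by (simp add: bij_betw_def)
qed

end
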